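(* For every positive integer $n$, $$\Phi(n)=\begin{cases} 2n\prod_{p\mid n}\left(1-\frac{\beta(p)}{p}\right), & \text{if } 4\mid n;\\ n\prod_{p\mid n}\left(1-\frac{\beta(p)}{p}\right), & \text{otherwise},\end{cases}$$ where the products run over the primes $p$ dividing $n$.
   Context: For a positive integer $n$, let $\mathcal{G}_n=\{a+bi\in\mathbb{Z}[i]/n\mathbb{Z}[i] : a^2+b^2\equiv 1 \pmod n\}$ and $\Phi(n)=|\mathcal{G}_n|$. For an odd prime $p$, $\beta(p)=\left(\frac{-1}{p}\right)$ is the Legendre symbol, and $\beta(2)=0$. *)

theory Defs
  imports "HOL-Number_Theory.Number_Theory"
begin

text \<open>Elements a+bi of Z[i]/nZ[i] are represented by pairs of residues (a,b) in {0..<n}^2.\<close>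
definition G :: "nat \<Rightarrow> (nat \<times> nat) set" where
  "G n = {(a, b). a < n \<and> b < n \<and> [a^2 + b^2 = 1] (mod n)}"

definition Phi :: "nat \<Rightarrow> nat" where
  "Phi n = card (G n)"

definition beta :: "nat \<Rightarrow> int" where
  "beta p = (if p = 2 then 0 else Legendre (-1) (int p))"

end

theory Submission
  imports Defs
begin

text \<open>
  Phi is multiplicative by the Chinese remainder theorem, so it suffices to count solutions of
  a^2 + b^2 = 1 modulo prime powers. Writing a solution modulo p M (with p dividing M) as
  (a0 + s M, b0 + t M) for a solution (a0, b0) modulo M, the congruence becomes linear in (s, t)
  modulo p. For odd p the linear form is nonzero, so every solution has exactly p lifts and
  Phi(p^e) = p^(e-1) Phi(p); stereographic projection from (-1, 0) gives Phi(p) = p - (-1/p).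
  For p = 2 a solution modulo 2^k lifts 4 times or not at all, and for k >= 3 shifting its odd
  coordinate by 2^(k-1) is an involution exchanging the liftable and the non-liftable solutions,
  so Phi doubles from 2^k to 2^(k+1); the values Phi 2, Phi 4 and Phi 8 are computed.
\<close>

definition unit_circle_mod :: "int \<Rightarrow> (int \<times> int) set" where
  "unit_circle_mod m =
     {(a, b). 0 \<le> a \<and> a < m \<and> 0 \<le> b \<and> b < m \<and> [a^2 + b^2 = 1] (mod m)}"

lemma finite_unit_circle_mod: "finite (unit_circle_mod m)"
  by (rule finite_subset[of _ "{0..<m} \<times> {0..<m}"]) (auto simp: unit_circle_mod_def)

lemma Phi_eq_card_unit_circle_mod: "Phi n = card (unit_circle_mod (int n))"
proof -
  let ?f = "\<lambda>(a, b). (int a, int b)"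
  have "unit_circle_mod (int n) = ?f ` G n"
  proof (intro equalityI subsetI)
    fix x assume "x \<in> unit_circle_mod (int n)"
    then obtain a b where x: "x = (a, b)" "0 \<le> a" "a < int n" "0 \<le> b" "b < int n"
      "[a^2 + b^2 = 1] (mod int n)" by (auto simp: unit_circle_mod_def)
    have "[int (nat a ^ 2 + nat b ^ 2) = int 1] (mod int n)" using x by simp
    then have "(nat a, nat b) \<in> G n" using x unfolding G_def cong_int_iff by auto
    then show "x \<in> ?f ` G n" using x by (auto intro!: image_eqI[where x = "(nat a, nat b)"])
  next
    fix x assume "x \<in> ?f ` G n"
    then obtain a b where x: "x = (int a, int b)" "(a, b) \<in> G n" by auto
    then have "[int (a^2 + b^2) = int 1] (mod int n)" unfolding cong_int_iff G_def by auto
    then show "x \<in> unit_circle_mod (int n)" using x by (auto simp: unit_circle_mod_def G_def)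
  qed
  moreover have "inj_on ?f (G n)" by (auto simp: inj_on_def)
  ultimately show ?thesis unfolding Phi_def by (simp add: card_image)
qed

lemma mod_mem_unit_circle_mod:
  fixes a b k :: int
  assumes "[a^2 + b^2 = 1] (mod k)" "k > 0"
  shows "(a mod k, b mod k) \<in> unit_circle_mod k"
proof -
  have "[(a mod k)^2 + (b mod k)^2 = a^2 + b^2] (mod k)"
    by (intro cong_add cong_pow) (simp_all add: cong_def)
  then have "[(a mod k)^2 + (b mod k)^2 = 1] (mod k)" using assms(1) by (rule cong_trans)
  then show ?thesis using assms(2) by (auto simp: unit_circle_mod_def)
qed

lemma card_unit_circle_mod_mult:
  fixes m n :: int
  assumes m: "m > 0" and n: "n > 0" and cop: "coprime m n"
  shows "card (unit_circle_mod (m * n)) = card (unit_circle_mod m) * card (unit_circle_mod n)"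
proof -
  define h where "h = (\<lambda>(a::int, b::int). ((a mod m, b mod m), (a mod n, b mod n)))"
  have "bij_betw h (unit_circle_mod (m * n)) (unit_circle_mod m \<times> unit_circle_mod n)"
  proof (rule bij_betw_imageI)
    show "inj_on h (unit_circle_mod (m * n))"
    proof (rule inj_onI)
      fix x y assume x: "x \<in> unit_circle_mod (m * n)" and y: "y \<in> unit_circle_mod (m * n)"
        and e: "h x = h y"
      obtain a b c d where ab: "x = (a, b)" and cd: "y = (c, d)" by force
      have "[a = c] (mod m)" "[a = c] (mod n)" "[b = d] (mod m)" "[b = d] (mod n)"
        using e by (auto simp: h_def ab cd cong_def)
      then have "[a = c] (mod m * n)" "[b = d] (mod m * n)"
        using cop by (auto intro: coprime_cong_mult)
      then show "x = y" using x y ab cd by (auto simp: unit_circle_mod_def cong_def)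
    qed
    show "h ` unit_circle_mod (m * n) = unit_circle_mod m \<times> unit_circle_mod n"
    proof (intro equalityI subsetI)
      fix y assume "y \<in> h ` unit_circle_mod (m * n)"
      then obtain a b where ab: "(a, b) \<in> unit_circle_mod (m * n)" "y = h (a, b)" by auto
      then have "[a^2 + b^2 = 1] (mod m * n)" by (auto simp: unit_circle_mod_def)
      then have "[a^2 + b^2 = 1] (mod m)" "[a^2 + b^2 = 1] (mod n)"
        using cong_modulus_mult[of _ _ m n] cong_modulus_mult[of _ _ n m] by (auto simp: mult.commute)
      then show "y \<in> unit_circle_mod m \<times> unit_circle_mod n"
        using ab m n by (auto simp: h_def intro: mod_mem_unit_circle_mod)
    next
      fix y assume "y \<in> unit_circle_mod m \<times> unit_circle_mod n"
      then obtain a1 b1 a2 b2 where y: "y = ((a1, b1), (a2, b2))"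
        "(a1, b1) \<in> unit_circle_mod m" "(a2, b2) \<in> unit_circle_mod n" by auto
      obtain x where x: "[x = a1] (mod m)" "[x = a2] (mod n)"
        using binary_chinese_remainder_int[OF cop] by blast
      obtain z where z: "[z = b1] (mod m)" "[z = b2] (mod n)"
        using binary_chinese_remainder_int[OF cop] by blast
      define a where "a = x mod (m * n)"
      define b where "b = z mod (m * n)"
      have am: "[a = a1] (mod m)" "[a = a2] (mod n)" "[b = b1] (mod m)" "[b = b2] (mod n)"
        using x z unfolding a_def b_def cong_def by (simp_all add: mod_mod_cancel)
      have "[a^2 + b^2 = a1^2 + b1^2] (mod m)" "[a^2 + b^2 = a2^2 + b2^2] (mod n)"
        using am by (auto intro!: cong_add cong_pow)
      then have "[a^2 + b^2 = 1] (mod m)" "[a^2 + b^2 = 1] (mod n)"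
        using y by (auto simp: unit_circle_mod_def elim: cong_trans)
      then have "[a^2 + b^2 = 1] (mod m * n)" using cop by (rule coprime_cong_mult)
      then have "(a, b) \<in> unit_circle_mod (m * n)"
        using m n by (auto simp: unit_circle_mod_def a_def b_def)
      moreover have "h (a, b) = y" using am y m n by (auto simp: h_def unit_circle_mod_def cong_def)
      ultimately show "y \<in> h ` unit_circle_mod (m * n)" by force
    qed
  qed
  then show ?thesis by (simp add: bij_betw_same_card card_cartesian_product)
qed

lemma Phi_mult:
  assumes "m > 0" "n > 0" "coprime m n"
  shows "Phi (m * n) = Phi m * Phi n"
  using card_unit_circle_mod_mult[of "int m" "int n"] assms by (simp add: Phi_eq_card_unit_circle_mod)

lemma Phi_prod_prime_powers:
  fixes P :: "nat set" and e :: "nat \<Rightarrow> nat"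
  assumes "finite P" "\<forall>p\<in>P. prime p"
  shows "Phi (\<Prod>p\<in>P. p ^ e p) = (\<Prod>p\<in>P. Phi (p ^ e p))"
  using assms
proof (induction P rule: finite_induct)
  case empty
  show ?case by (simp add: Phi_def G_def cong_def)
next
  case (insert q P)
  have "coprime (q ^ e q) (\<Prod>p\<in>P. p ^ e p)"
  proof (rule prod_coprime_right)
    fix p assume "p \<in> P"
    then have "p \<noteq> q" "prime p" "prime q" using insert by auto
    then have "coprime q p" by (simp add: primes_coprime)
    then show "coprime (q ^ e q) (p ^ e p)" by simp
  qed
  moreover have "(\<Prod>p\<in>P. p ^ e p) > 0" "q ^ e q > 0"
    using insert by (auto intro!: prod_pos simp: prime_gt_0_nat)
  ultimately show ?case using insert Phi_mult by simp
qed

lemma card_eq_sum_card_fibers: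
  assumes "finite A" "finite B" "f ` A \<subseteq> B"
  shows "card A = (\<Sum>b\<in>B. card {a\<in>A. f a = b})"
proof -
  have "A = (\<Union>b\<in>B. {a\<in>A. f a = b})" using assms(3) by auto
  then have "card A = card (\<Union>b\<in>B. {a\<in>A. f a = b})" by simp
  also have "\<dots> = (\<Sum>b\<in>B. card {a\<in>A. f a = b})"
    using assms(1,2) by (intro card_UN_disjoint) auto
  finally show ?thesis .
qed

lemma lift_sum_squares_cong_iff:
  fixes a b s t M c p :: int
  assumes "a^2 + b^2 - 1 = M * c" "p dvd M" "M \<noteq> 0"
  shows "[(a + s * M)^2 + (b + t * M)^2 = 1] (mod p * M) \<longleftrightarrow> p dvd c + 2 * (s * a + t * b)"
proof -
  have "(a + s * M)^2 + (b + t * M)^2 - 1 = M * (c + 2 * (s * a + t * b) + M * (s^2 + t^2))"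
    using assms(1) by (simp add: power2_eq_square algebra_simps)
  then have "[(a + s * M)^2 + (b + t * M)^2 = 1] (mod p * M) \<longleftrightarrow>
             M * p dvd M * (c + 2 * (s * a + t * b) + M * (s^2 + t^2))"
    unfolding cong_iff_dvd_diff by (simp add: mult.commute)
  also have "\<dots> \<longleftrightarrow> p dvd c + 2 * (s * a + t * b) + M * (s^2 + t^2)"
    using assms(3) by simp
  also have "\<dots> \<longleftrightarrow> p dvd c + 2 * (s * a + t * b)"
    using assms(2) by (simp add: dvd_add_left_iff)
  finally show ?thesis .
qed

text \<open>The lifts of a point (a, b) modulo M to modulo p M are the points (a + s M, b + t M)
  with 0 \<le> s, t < p, and they are counted by the linear congruence in (s, t).\<close>

definition lift_params :: "int \<Rightarrow> int \<Rightarrow> int \<times> int \<Rightarrow> (int \<times> int) set" where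
  "lift_params p M x =
     {(s, t). 0 \<le> s \<and> s < p \<and> 0 \<le> t \<and> t < p \<and>
              p dvd (fst x^2 + snd x^2 - 1) div M + 2 * (s * fst x + t * snd x)}"

lemma card_lift_fiber:
  fixes p M a b :: int
  assumes p: "p > 0" and M: "M > 0" and pM: "p dvd M" and x: "(a, b) \<in> unit_circle_mod M"
  shows "card {x \<in> unit_circle_mod (p * M). (fst x mod M, snd x mod M) = (a, b)} =
         card (lift_params p M (a, b))"
proof -
  define c where "c = (a^2 + b^2 - 1) div M"
  let ?T = "lift_params p M (a, b)"
  let ?g = "\<lambda>(s, t). (a + s * M, b + t * M)"
  have x': "0 \<le> a" "a < M" "0 \<le> b" "b < M" "[a^2 + b^2 = 1] (mod M)"
    using x by (auto simp: unit_circle_mod_def)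
  then have "M dvd a^2 + b^2 - 1" by (simp add: cong_iff_dvd_diff)
  then have hc: "a^2 + b^2 - 1 = M * c" unfolding c_def by simp
  note lift_iff = lift_sum_squares_cong_iff[OF hc pM]
  have T: "?T = {(s, t). 0 \<le> s \<and> s < p \<and> 0 \<le> t \<and> t < p \<and> p dvd c + 2 * (s * a + t * b)}"
    by (simp add: lift_params_def c_def)
  have digit_bound: "0 \<le> u + s * M \<and> u + s * M < p * M" if "0 \<le> s" "s < p" "0 \<le> u" "u < M"
    for s u :: int
  proof -
    have "s * M \<le> (p - 1) * M" using that M by (intro mult_right_mono) auto
    then show ?thesis using that M by (auto simp: algebra_simps)
  qed
  have "{x \<in> unit_circle_mod (p * M). (fst x mod M, snd x mod M) = (a, b)} = ?g ` ?T"
  proof (intro equalityI subsetI)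
    fix x assume "x \<in> {x \<in> unit_circle_mod (p * M). (fst x mod M, snd x mod M) = (a, b)}"
    then obtain a' b' where x: "x = (a', b')" "0 \<le> a'" "a' < p * M" "0 \<le> b'" "b' < p * M"
       "[a'^2 + b'^2 = 1] (mod p * M)" "a' mod M = a" "b' mod M = b"
      by (auto simp: unit_circle_mod_def)
    define s where "s = a' div M"
    define t where "t = b' div M"
    have st: "a' = a + s * M" "b' = b + t * M" using x unfolding s_def t_def
      by (metis add.commute div_mult_mod_eq)+
    have "s * M < p * M" "t * M < p * M" using st x x' by linarith+
    then have "s < p" "t < p" using M by (meson mult_less_cancel_right_pos)+
    moreover have "0 \<le> s" "0 \<le> t" using x M unfolding s_def t_def
      by (simp_all add: pos_imp_zdiv_nonneg_iff)
    moreover have "p dvd c + 2 * (s * a + t * b)" using x(6) lift_iff M unfolding st by simp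
    ultimately show "x \<in> ?g ` ?T" using x st T by (auto intro!: image_eqI[where x = "(s, t)"])
  next
    fix x assume "x \<in> ?g ` ?T"
    then obtain s t where st: "x = (a + s * M, b + t * M)" "0 \<le> s" "s < p" "0 \<le> t" "t < p"
       "p dvd c + 2 * (s * a + t * b)" using T by auto
    have "[(a + s * M)^2 + (b + t * M)^2 = 1] (mod p * M)" using st(6) lift_iff M by simp
    moreover have "(a + s * M) mod M = a" "(b + t * M) mod M = b" using x' by simp_all
    ultimately show "x \<in> {x \<in> unit_circle_mod (p * M). (fst x mod M, snd x mod M) = (a, b)}"
      using st digit_bound x' by (auto simp: unit_circle_mod_def)
  qed
  moreover have "inj_on ?g ?T" using M by (auto simp: inj_on_def)
  ultimately show ?thesis by (simp add: card_image)
qed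

lemma card_unit_circle_mod_lift:
  fixes p M :: int
  assumes p: "p > 0" and M: "M > 0" and pM: "p dvd M"
  shows "card (unit_circle_mod (p * M)) = (\<Sum>x\<in>unit_circle_mod M. card (lift_params p M x))"
proof -
  let ?r = "\<lambda>x::int \<times> int. (fst x mod M, snd x mod M)"
  have "?r ` unit_circle_mod (p * M) \<subseteq> unit_circle_mod M"
  proof
    fix y assume "y \<in> ?r ` unit_circle_mod (p * M)"
    then obtain a b where ab: "y = ?r (a, b)" "[a^2 + b^2 = 1] (mod M * p)"
      by (auto simp: unit_circle_mod_def mult.commute)
    from ab(2) have "[a^2 + b^2 = 1] (mod M)" by (rule cong_modulus_mult)
    then show "y \<in> unit_circle_mod M" using ab(1) M by (simp add: mod_mem_unit_circle_mod)
  qed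
  then have "card (unit_circle_mod (p * M)) =
      (\<Sum>x\<in>unit_circle_mod M. card {y\<in>unit_circle_mod (p * M). ?r y = x})"
    by (intro card_eq_sum_card_fibers finite_unit_circle_mod)
  also have "\<dots> = (\<Sum>x\<in>unit_circle_mod M. card (lift_params p M x))"
    using card_lift_fiber[OF p M pM] by (intro sum.cong) auto
  finally show ?thesis .
qed

lemma card_linear_solutions_mod:
  fixes p c f g :: int
  assumes p: "p > 0" and cop: "coprime f p \<or> coprime g p"
  shows "card {(s, t). 0 \<le> s \<and> s < p \<and> 0 \<le> t \<and> t < p \<and> p dvd c + f * s + g * t} = nat p"
proof -
  let ?L = "\<lambda>f g. {(s, t). 0 \<le> s \<and> s < p \<and> 0 \<le> t \<and> t < p \<and> p dvd c + f * s + g * t}"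
  have card_L: "card (?L f g) = nat p" if "coprime g p" for f g
  proof -
    define v where "v = modular_inverse p g"
    have pv: "p dvd g * v - 1"
      using cong_modular_inverse1[OF that] by (simp add: v_def cong_iff_dvd_diff)
    let ?h = "\<lambda>s. (s, ((- c - f * s) * v) mod p)"
    have "?L f g = ?h ` {0..<p}"
    proof (intro equalityI subsetI)
      fix x assume "x \<in> ?L f g"
      then obtain s t where st: "x = (s, t)" "0 \<le> s" "s < p" "0 \<le> t" "t < p"
        "p dvd c + f * s + g * t" by auto
      have "t - (- c - f * s) * v = v * (c + f * s + g * t) - t * (g * v - 1)"
        by (simp add: algebra_simps)
      then have "p dvd t - (- c - f * s) * v" using st(6) pv by simp
      then have "[t = (- c - f * s) * v] (mod p)" by (simp add: cong_iff_dvd_diff)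
      then have "t = ((- c - f * s) * v) mod p" using st by (simp add: cong_def)
      then show "x \<in> ?h ` {0..<p}" using st by auto
    next
      fix x assume "x \<in> ?h ` {0..<p}"
      then obtain s where s: "x = ?h s" "0 \<le> s" "s < p" by auto
      define t where "t = ((- c - f * s) * v) mod p"
      have "p dvd (- c - f * s) * v - t" unfolding t_def by (rule dvd_minus_mod)
      moreover have "c + f * s + g * t = (c + f * s) * (1 - g * v) - g * ((- c - f * s) * v - t)"
        by (simp add: algebra_simps)
      ultimately have "p dvd c + f * s + g * t" using pv
        by (metis dvd_diff dvd_mult dvd_mult2 minus_diff_eq dvd_minus_iff)
      then show "x \<in> ?L f g" using s p by (auto simp: t_def)
    qed
    moreover have "inj_on ?h {0..<p}" by (auto simp: inj_on_def)
    ultimately show ?thesis by (simp add: card_image)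
  qed
  show ?thesis
  proof (cases "coprime g p")
    case True
    then show ?thesis by (rule card_L)
  next
    case False
    have "?L f g = prod.swap ` ?L g f" by (auto simp: image_iff add_ac)
    then show ?thesis using card_L[of f g] False cop by (simp add: card_image)
  qed
qed

lemma card_unit_circle_mod_odd_prime_power_Suc:
  fixes p :: int and k :: nat
  assumes pr: "prime p" and p2: "p \<noteq> 2" and k: "k \<ge> 1"
  shows "card (unit_circle_mod (p ^ Suc k)) = nat p * card (unit_circle_mod (p ^ k))"
proof -
  define M where "M = p ^ k"
  have p: "p > 0" using pr by (simp add: prime_gt_0_int)
  have M: "M > 0" using p by (simp add: M_def)
  have pM: "p dvd M" using k by (simp add: M_def dvd_power)
  have p_not_dvd_2: "\<not> p dvd 2"
  proof
    assume "p dvd 2"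
    then have "p \<le> 2" by (simp add: zdvd_imp_le)
    then show False using p2 prime_ge_2_int[OF pr] by simp
  qed
  have "card (lift_params p M x) = nat p" if x: "x \<in> unit_circle_mod M" for x
  proof -
    obtain a b where ab: "x = (a, b)" by force
    have "M dvd a^2 + b^2 - 1" using x ab by (simp add: unit_circle_mod_def cong_iff_dvd_diff)
    then have "p dvd a^2 + b^2 - 1" using pM by (rule dvd_trans[rotated])
    have "\<not> (p dvd a \<and> p dvd b)"
    proof
      assume "p dvd a \<and> p dvd b"
      then have "p dvd a^2 + b^2" by (simp add: power2_eq_square)
      then have "p dvd (a^2 + b^2) - (a^2 + b^2 - 1)"
        using \<open>p dvd a^2 + b^2 - 1\<close> by (rule dvd_diff)
      then have "p dvd 1" by simp
      then show False using pr by (meson not_prime_unit)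
    qed
    then have "\<not> p dvd 2 * a \<or> \<not> p dvd 2 * b"
      using p_not_dvd_2 pr by (simp add: prime_dvd_mult_iff)
    then have "coprime (2 * a) p \<or> coprime (2 * b) p"
      using prime_imp_coprime[OF pr] coprime_commute by blast
    then have "card {(s, t). 0 \<le> s \<and> s < p \<and> 0 \<le> t \<and> t < p \<and>
        p dvd (a^2 + b^2 - 1) div M + 2 * a * s + 2 * b * t} = nat p"
      by (rule card_linear_solutions_mod[OF p])
    moreover have linear: "d + 2 * (s * a + t * b) = d + 2 * a * s + 2 * b * t" for d s t :: int
      by (simp add: algebra_simps)
    ultimately show ?thesis by (simp only: lift_params_def ab fst_conv snd_conv linear)
  qed
  then have "card (unit_circle_mod (p * M)) = nat p * card (unit_circle_mod M)"
    using card_unit_circle_mod_lift[OF p M pM] by simp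
  then show ?thesis by (simp add: M_def)
qed

lemma card_unit_circle_mod_odd_prime_power:
  fixes p :: int and e :: nat
  assumes "prime p" "p \<noteq> 2" "e \<ge> 1"
  shows "card (unit_circle_mod (p ^ e)) = nat p ^ (e - 1) * card (unit_circle_mod p)"
  using assms(3)
proof (induction e rule: dec_induct)
  case base
  then show ?case by simp
next
  case (step m)
  then show ?case using card_unit_circle_mod_odd_prime_power_Suc[OF assms(1,2), of m]
    by (cases m) auto
qed

lemma card_unit_circle_mod_double:
  fixes M :: int
  assumes M: "M > 0" and "even M"
  shows "card (unit_circle_mod (2 * M)) =
         4 * card {x\<in>unit_circle_mod M. 2 * M dvd fst x^2 + snd x^2 - 1}"
proof -
  have "card (lift_params 2 M x) = (if 2 * M dvd fst x^2 + snd x^2 - 1 then 4 else 0)"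
    if x: "x \<in> unit_circle_mod M" for x
  proof -
    define c where "c = (fst x^2 + snd x^2 - 1) div M"
    have "M dvd fst x^2 + snd x^2 - 1" using x by (auto simp: unit_circle_mod_def cong_iff_dvd_diff)
    then have "fst x^2 + snd x^2 - 1 = M * c" by (simp add: c_def)
    then have liftable: "2 * M dvd fst x^2 + snd x^2 - 1 \<longleftrightarrow> 2 dvd c"
      using M by (simp add: mult.commute)
    have "2 dvd c + 2 * y \<longleftrightarrow> 2 dvd c" for y :: int by (rule dvd_add_left_iff) simp
    then have "lift_params 2 M x = (if 2 dvd c then {0..<2} \<times> {0..<2} else {})"
      by (auto simp: lift_params_def c_def)
    then show ?thesis using liftable by simp
  qed
  then have "card (unit_circle_mod (2 * M)) =
      (\<Sum>x\<in>unit_circle_mod M. if 2 * M dvd fst x^2 + snd x^2 - 1 then 4 else 0)"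
    using card_unit_circle_mod_lift[of 2 M] assms by simp
  also have "\<dots> = 4 * card {x\<in>unit_circle_mod M. 2 * M dvd fst x^2 + snd x^2 - 1}"
    by (simp add: sum.If_cases finite_unit_circle_mod Int_def)
  finally show ?thesis .
qed

definition shift_half :: "int \<Rightarrow> int \<Rightarrow> int" where
  "shift_half H x = (if x < H then x + H else x - H)"

lemma shift_half_odd:
  fixes H x :: int
  assumes H: "H > 0" "even H" and x: "odd x" "0 \<le> x" "x < 2 * H"
  shows "0 \<le> shift_half H x \<and> shift_half H x < 2 * H \<and> odd (shift_half H x) \<and>
         shift_half H (shift_half H x) = x \<and>
         4 * H dvd (shift_half H x)^2 - x^2 - 2 * H - H^2"
proof -
  obtain j where j: "x = 2 * j + 1" using x(1) by (metis oddE)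
  have "(x + H)^2 - x^2 - 2 * H - H^2 = 4 * H * j" "(x - H)^2 - x^2 - 2 * H - H^2 = 4 * H * (- j - 1)"
    unfolding j by (simp_all add: power2_eq_square algebra_simps)
  then show ?thesis using H x by (simp add: shift_half_def)
qed

lemma dvd_double_toggle:
  fixes D Q Q' :: int
  assumes "D \<noteq> 0" "D dvd Q" "2 * D dvd Q' - Q - D"
  shows "D dvd Q' \<and> (2 * D dvd Q' \<longleftrightarrow> \<not> 2 * D dvd Q)"
proof -
  obtain c j where "Q = D * c" "Q' - Q - D = 2 * D * j" using assms(2,3) by (auto elim!: dvdE)
  then have "Q = D * c" "Q' = D * (c + 1 + 2 * j)" by (simp_all add: algebra_simps)
  then show ?thesis using assms(1) by (simp add: mult.commute[of 2 D])
qed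

text \<open>Shifting the odd coordinate of a point modulo 2 H by H changes a^2 + b^2 - 1 by 2 H
  modulo 4 H (this needs 4 H dvd H^2), so it exchanges the points that lift to modulus 4 H
  with those that do not.\<close>

definition shift_odd_coord :: "int \<Rightarrow> int \<times> int \<Rightarrow> int \<times> int" where
  "shift_odd_coord H x =
     (if odd (fst x) then (shift_half H (fst x), snd x) else (fst x, shift_half H (snd x)))"

lemma shift_odd_coord_props:
  fixes H :: int
  assumes H: "H > 0" "even H" "4 * H dvd H^2" and x: "x \<in> unit_circle_mod (2 * H)"
  defines "y \<equiv> shift_odd_coord H x"
  shows "y \<in> unit_circle_mod (2 * H)" "shift_odd_coord H y = x"
    "4 * H dvd fst y^2 + snd y^2 - 1 \<longleftrightarrow> \<not> 4 * H dvd fst x^2 + snd x^2 - 1"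
proof -
  obtain a b where ab: "x = (a, b)" by force
  have r: "0 \<le> a" "a < 2 * H" "0 \<le> b" "b < 2 * H" and Q: "2 * H dvd a^2 + b^2 - 1"
    using x ab by (auto simp: unit_circle_mod_def cong_iff_dvd_diff)
  have "odd a \<or> odd b"
  proof (rule ccontr)
    assume "\<not> (odd a \<or> odd b)"
    then have "even (a^2 + b^2)" by simp
    moreover have "even (a^2 + b^2 - 1)" using Q by (rule dvd_trans[rotated]) simp
    ultimately show False by simp
  qed
  then consider "odd a" "y = (shift_half H a, b)" | "even a" "odd b" "y = (a, shift_half H b)"
    by (auto simp: y_def shift_odd_coord_def ab)
  then have "y \<in> unit_circle_mod (2 * H) \<and> shift_odd_coord H y = x \<and>
      (4 * H dvd fst y^2 + snd y^2 - 1 \<longleftrightarrow> \<not> 4 * H dvd fst x^2 + snd x^2 - 1)"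
  proof cases
    case 1
    note s = shift_half_odd[OF H(1,2) 1(1) r(1,2)]
    have "4 * H dvd ((shift_half H a)^2 - a^2 - 2 * H - H^2) + H^2" using s H(3) by (intro dvd_add) auto
    then have "2 * (2 * H) dvd ((shift_half H a)^2 + b^2 - 1) - (a^2 + b^2 - 1) - 2 * H"
      by (simp add: algebra_simps)
    note t = dvd_double_toggle[OF _ Q this]
    show ?thesis using t s 1 H r ab by (auto simp: shift_odd_coord_def unit_circle_mod_def cong_iff_dvd_diff)
  next
    case 2
    note s = shift_half_odd[OF H(1,2) 2(2) r(3,4)]
    have "4 * H dvd ((shift_half H b)^2 - b^2 - 2 * H - H^2) + H^2" using s H(3) by (intro dvd_add) auto
    then have "2 * (2 * H) dvd (a^2 + (shift_half H b)^2 - 1) - (a^2 + b^2 - 1) - 2 * H"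
      by (simp add: algebra_simps)
    note t = dvd_double_toggle[OF _ Q this]
    show ?thesis using t s 2 H r ab by (auto simp: shift_odd_coord_def unit_circle_mod_def cong_iff_dvd_diff)
  qed
  then show "y \<in> unit_circle_mod (2 * H)" "shift_odd_coord H y = x"
    "4 * H dvd fst y^2 + snd y^2 - 1 \<longleftrightarrow> \<not> 4 * H dvd fst x^2 + snd x^2 - 1"
    by auto
qed

lemma card_unit_circle_mod_eq_twice_liftable:
  fixes H :: int
  assumes H: "H > 0" "even H" "4 * H dvd H^2"
  shows "card (unit_circle_mod (2 * H)) =
         2 * card {x\<in>unit_circle_mod (2 * H). 4 * H dvd fst x^2 + snd x^2 - 1}"
proof -
  let ?S = "unit_circle_mod (2 * H)"
  let ?G = "{x\<in>?S. 4 * H dvd fst x^2 + snd x^2 - 1}"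
  let ?B = "{x\<in>?S. \<not> 4 * H dvd fst x^2 + snd x^2 - 1}"
  note sp = shift_odd_coord_props[OF H]
  have fin: "finite ?G" "finite ?B" using finite_unit_circle_mod by auto
  have "card ?S = card (?G \<union> ?B)" by (rule arg_cong[of _ _ card]) auto
  also have "\<dots> = card ?G + card ?B" using fin by (intro card_Un_disjoint) auto
  finally have card_S: "card ?S = card ?G + card ?B" .
  have "bij_betw (shift_odd_coord H) ?G ?B"
    by (rule bij_betw_byWitness[where f' = "shift_odd_coord H"]) (use sp in auto)
  then show ?thesis using card_S by (simp add: bij_betw_same_card)
qed

lemma card_unit_circle_mod_two_power_Suc:
  fixes k :: nat
  assumes k: "k \<ge> 3"
  shows "card (unit_circle_mod (2 ^ Suc k)) = 2 * card (unit_circle_mod (2 ^ k))"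
proof -
  define H :: int where "H = 2 ^ (k - 1)"
  have k2: "(2::int) ^ k = 2 * H" using k unfolding H_def by (cases k) auto
  have H: "H > 0" "even H" using k by (auto simp: H_def)
  have "(2::int) ^ (k + 1) dvd 2 ^ (2 * (k - 1))" using k by (intro le_imp_power_dvd) auto
  then have H4: "4 * H dvd H^2" using k2 by (simp add: H_def power_mult[symmetric] mult.commute)
  have "card (unit_circle_mod (2 ^ Suc k)) = card (unit_circle_mod (2 * (2 * H)))" using k2 by simp
  also have "\<dots> = 4 * card {x\<in>unit_circle_mod (2 * H). 2 * (2 * H) dvd fst x^2 + snd x^2 - 1}"
    by (rule card_unit_circle_mod_double) (use H in auto)
  also have "\<dots> = 2 * card (unit_circle_mod (2 * H))"
    using card_unit_circle_mod_eq_twice_liftable[OF H H4] by simp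
  finally show ?thesis using k2 by simp
qed

lemma G_eq_filter: "G n = Set.filter (\<lambda>(a, b). (a^2 + b^2) mod n = 1 mod n) ({0..<n} \<times> {0..<n})"
  by (auto simp: G_def cong_def)

lemma Phi_2: "Phi 2 = 2" unfolding Phi_def G_eq_filter by code_simp
lemma Phi_4: "Phi 4 = 8" unfolding Phi_def G_eq_filter by code_simp
lemma Phi_8: "Phi 8 = 16" unfolding Phi_def G_eq_filter by code_simp

lemma Phi_two_power:
  assumes "k \<ge> 2"
  shows "Phi (2 ^ k) = 2 ^ (k + 1)"
proof -
  have "card (unit_circle_mod (2 ^ k)) = 2 ^ (k + 1)" using assms
  proof (induction k rule: dec_induct)
    case base
    then show ?case using Phi_4 Phi_eq_card_unit_circle_mod[of 4] by simp
  next
    case (step m)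
    show ?case
    proof (cases "m = 2")
      case True
      then show ?thesis using Phi_8 Phi_eq_card_unit_circle_mod[of 8] by simp
    next
      case False
      then show ?thesis using card_unit_circle_mod_two_power_Suc[of m] step by simp
    qed
  qed
  then show ?thesis using Phi_eq_card_unit_circle_mod[of "2 ^ k"] by simp
qed

lemma cong_square_imp_cong_or_cong_neg:
  fixes p s t :: int
  assumes "prime p" "[t^2 = s^2] (mod p)"
  shows "[t = s] (mod p) \<or> [t = - s] (mod p)"
proof -
  have "p dvd (t - s) * (t + s)"
    using assms(2) by (simp add: cong_iff_dvd_diff power2_eq_square algebra_simps)
  then show ?thesis using assms(1) by (auto simp: cong_iff_dvd_diff prime_dvd_mult_iff)
qed

lemma card_square_roots_mod_prime:
  fixes p a :: int
  assumes p: "prime p" "p \<noteq> 2" and a: "\<not> p dvd a"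
  shows "int (card {t. 0 \<le> t \<and> t < p \<and> [t^2 = a] (mod p)}) = 1 + Legendre a p"
proof -
  let ?R = "{t. 0 \<le> t \<and> t < p \<and> [t^2 = a] (mod p)}"
  have a0: "\<not> [a = 0] (mod p)" using a by (simp add: cong_0_iff)
  show ?thesis
  proof (cases "QuadRes p a")
    case False
    then have "?R = {}" by (auto simp: QuadRes_def)
    then have "card ?R = 0" by (simp only: card.empty)
    then show ?thesis using False a0 by (simp add: Legendre_def)
  next
    case True
    then obtain y where y: "[y^2 = a] (mod p)" by (auto simp: QuadRes_def)
    have p0: "p > 0" using p by (simp add: prime_gt_0_int)
    define t0 where "t0 = y mod p"
    define t1 where "t1 = p - t0"
    have t0: "0 \<le> t0" "t0 < p" "[t0 = y] (mod p)" using p0 by (simp_all add: t0_def cong_def)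
    then have t0_root: "[t0^2 = a] (mod p)" using y by (metis cong_pow cong_trans)
    then have "t0 \<noteq> 0" using a0 by (auto simp: cong_sym_eq)
    then have t1: "0 \<le> t1" "t1 < p" using t0 by (auto simp: t1_def)
    have t1_neg: "[t1 = - t0] (mod p)" by (simp add: t1_def cong_iff_dvd_diff)
    then have "[t1^2 = (- t0)^2] (mod p)" by (rule cong_pow)
    then have t1_root: "[t1^2 = a] (mod p)" using t0_root by (simp add: cong_trans)
    have "t0 \<noteq> t1"
    proof
      assume "t0 = t1"
      then have "p = 2 * t0" by (simp add: t1_def)
      then have "2 dvd p" by simp
      then have "(2::int) = 1 \<or> (2::int) = p" using p(1) unfolding prime_int_iff by (metis zero_le_numeral)
      then show False using p(2) by simp
    qed
    moreover have "?R = {t0, t1}"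
    proof (intro equalityI subsetI)
      fix t assume t: "t \<in> ?R"
      then have "[t^2 = t0^2] (mod p)" using t0_root by (auto intro: cong_trans cong_sym)
      then have "[t = t0] (mod p) \<or> [t = - t0] (mod p)" by (rule cong_square_imp_cong_or_cong_neg[OF p(1)])
      then have "[t = t0] (mod p) \<or> [t = t1] (mod p)" using t1_neg by (meson cong_sym cong_trans)
      then show "t \<in> {t0, t1}" using t t0 t1 by (auto dest: cong_less_imp_eq_int)
    qed (use t0 t1 t0_root t1_root in auto)
    ultimately show ?thesis using True a0 by (simp add: Legendre_def)
  qed
qed

lemma dvd_lin_comb2:
  fixes d :: int
  shows "d dvd A1 \<Longrightarrow> d dvd A2 \<Longrightarrow> d dvd a1 * A1 + a2 * A2"
  by (simp add: dvd_add dvd_mult)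

lemma dvd_lin_comb3:
  fixes d :: int
  shows "d dvd A1 \<Longrightarrow> d dvd A2 \<Longrightarrow> d dvd A3 \<Longrightarrow>
    d dvd a1 * A1 + a2 * A2 + a3 * A3"
  by (simp add: dvd_add dvd_mult)

context
  fixes p :: int
  assumes pr: "prime p" and p2: "p \<noteq> 2"
begin

lemma p_pos: "p > 0"
  using pr by (simp add: prime_gt_0_int)

lemma not_dvd_two: "\<not> p dvd 2"
proof
  assume "p dvd 2"
  then have "p \<le> 2" by (simp add: zdvd_imp_le)
  then show False using p2 prime_ge_2_int[OF pr] by simp
qed

lemma dvd_cancel_square:
  assumes "\<not> p dvd a" "p dvd a^2 * z" shows "p dvd z"
  using assms pr by (simp add: prime_dvd_mult_iff prime_dvd_power_iff)

lemma mod_eq_if_dvd_diff: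
  assumes "p dvd X - x" "0 \<le> x" "x < p" shows "X mod p = x"
  using assms by (simp add: cong_iff_dvd_diff[symmetric] cong_def)

lemma dvd_mult_modular_inverse_minus_one:
  assumes "\<not> p dvd u" shows "p dvd u * modular_inverse p u - 1"
proof -
  have "coprime u p" using prime_imp_coprime[OF pr assms] by (simp add: coprime_commute)
  then show ?thesis using cong_modular_inverse1[of u p] by (simp add: cong_iff_dvd_diff)
qed

text \<open>Stereographic projection from (-1, 0): the slope t corresponds to the point
  ((1 - t^2) / (1 + t^2), 2 t / (1 + t^2)), and a point (x, y) other than (-1, 0) to the slope
  y / (1 + x). Slopes with 1 + t^2 = 0 have no point, so there are p - 1 - (-1/p) points
  besides (-1, 0).\<close>

definition circle_param :: "int \<Rightarrow> int \<times> int" where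
  "circle_param t =
     (((1 - t^2) * modular_inverse p (1 + t^2)) mod p, (2 * t * modular_inverse p (1 + t^2)) mod p)"

definition circle_slope :: "int \<times> int \<Rightarrow> int" where
  "circle_slope z = (snd z * modular_inverse p (1 + fst z)) mod p"

lemma circle_param_mem:
  assumes t: "\<not> p dvd t^2 + 1"
  shows "circle_param t \<in> unit_circle_mod p - {(p - 1, 0)}" "\<not> p dvd 1 + fst (circle_param t)"
    "p dvd snd (circle_param t) - t * (1 + fst (circle_param t))"
proof -
  define v where "v = modular_inverse p (1 + t^2)"
  define x where "x = ((1 - t^2) * v) mod p"
  define y where "y = (2 * t * v) mod p"
  have xy: "circle_param t = (x, y)" by (simp add: circle_param_def x_def y_def v_def)
  have Dv: "p dvd (1 + t^2) * v - 1"
    unfolding v_def using t by (intro dvd_mult_modular_inverse_minus_one) (simp add: add.commute)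
  have Dx: "p dvd (1 - t^2) * v - x" unfolding x_def by (rule dvd_minus_mod)
  have Dy: "p dvd 2 * t * v - y" unfolding y_def by (rule dvd_minus_mod)
  have "x^2 + y^2 - 1 = ((1 + t^2) * v + 1) * ((1 + t^2) * v - 1)
      + (- ((1 - t^2) * v + x)) * ((1 - t^2) * v - x) + (- (2 * t * v + y)) * (2 * t * v - y)"
    by (simp add: algebra_simps power2_eq_square)
  then have "p dvd x^2 + y^2 - 1" using Dv Dx Dy by (simp only: dvd_lin_comb3)
  moreover have "0 \<le> x" "x < p" "0 \<le> y" "y < p" using p_pos by (simp_all add: x_def y_def)
  ultimately have on_circle: "(x, y) \<in> unit_circle_mod p"
    by (simp add: unit_circle_mod_def cong_iff_dvd_diff)
  have nx: "\<not> p dvd 1 + x"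
  proof
    assume "p dvd 1 + x"
    then have "p dvd ((1 - t^2) * v - x) + (1 + x)" using Dx by (rule dvd_add[rotated])
    then have "p dvd (1 - t^2) * v + 1" by simp
    moreover have "2 = (1 + t^2) * ((1 - t^2) * v + 1) + (- (1 - t^2)) * ((1 + t^2) * v - 1)"
      by (simp add: algebra_simps power2_eq_square)
    ultimately have "p dvd 2" using Dv by (metis dvd_lin_comb2)
    then show False using not_dvd_two by simp
  qed
  then have "x \<noteq> p - 1" by auto
  then show "circle_param t \<in> unit_circle_mod p - {(p - 1, 0)}" "\<not> p dvd 1 + fst (circle_param t)"
    using on_circle nx xy by auto
  have "y - t * (1 + x) = (- 1) * (2 * t * v - y) + t * ((1 - t^2) * v - x) + t * ((1 + t^2) * v - 1)"
    by (simp add: algebra_simps power2_eq_square)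
  then have "p dvd y - t * (1 + x)" using Dy Dx Dv by (simp only: dvd_lin_comb3)
  then show "p dvd snd (circle_param t) - t * (1 + fst (circle_param t))" using xy by simp
qed

lemma not_dvd_one_plus_fst:
  assumes "(x, y) \<in> unit_circle_mod p - {(p - 1, 0)}"
  shows "\<not> p dvd 1 + x"
proof
  assume "p dvd 1 + x"
  have r: "0 \<le> x" "x < p" "0 \<le> y" "y < p" and Q: "p dvd x^2 + y^2 - 1"
    using assms by (auto simp: unit_circle_mod_def cong_iff_dvd_diff)
  with \<open>p dvd 1 + x\<close> have x: "x = p - 1" by (auto dest: zdvd_imp_le)
  have "x^2 + y^2 - 1 = y^2 + p * (p - 2)" unfolding x by (simp add: algebra_simps power2_eq_square)
  then have "y^2 = (x^2 + y^2 - 1) - p * (p - 2)" by simp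
  moreover have "p dvd (x^2 + y^2 - 1) - p * (p - 2)" using Q by (rule dvd_diff) simp
  ultimately have "p dvd y^2" by (simp only:)
  then have "p dvd y" using pr by (simp add: prime_dvd_power_iff)
  then have "y = 0" using r by (metis zdvd_imp_le not_le antisym_conv1)
  then show False using assms x by simp
qed

lemma slope_relations:
  assumes Q: "p dvd x^2 + y^2 - 1" and x: "\<not> p dvd 1 + x" and E: "p dvd (1 + x) * t - y"
  shows "\<not> p dvd t^2 + 1" "p dvd (1 - x) - (1 + x) * t^2" "p dvd 2 * t - y * (1 + t^2)"
proof -
  define E where "E = (1 + x) * t - y"
  show "\<not> p dvd t^2 + 1"
  proof
    assume "p dvd t^2 + 1"
    moreover have "2 * (1 + x) = (1 + x)^2 * (t^2 + 1) + (- 1) * (x^2 + y^2 - 1) + (- ((1 + x) * t + y)) * E"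
      unfolding E_def by (simp add: algebra_simps power2_eq_square)
    ultimately have "p dvd 2 * (1 + x)" using Q E by (simp only: E_def dvd_lin_comb3)
    then have "p dvd 2 \<or> p dvd 1 + x" by (simp only: prime_dvd_mult_iff[OF pr])
    then show False using x not_dvd_two by blast
  qed
  have "(1 + x)^2 * ((1 - x) - (1 + x) * t^2) = (- (1 + x)) * (x^2 + y^2 - 1) + (- (1 + x) * (E + 2 * y)) * E"
    unfolding E_def by (simp add: algebra_simps power2_eq_square)
  then have "p dvd (1 + x)^2 * ((1 - x) - (1 + x) * t^2)" using Q E by (simp only: E_def dvd_lin_comb2)
  then show "p dvd (1 - x) - (1 + x) * t^2" by (rule dvd_cancel_square[OF x])
  have "(1 + x)^2 * (2 * t - y * (1 + t^2)) = (- y) * (x^2 + y^2 - 1) + (2 * (1 + x) - 2 * y^2 - y * E) * E"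
    unfolding E_def by (simp add: algebra_simps power2_eq_square)
  then have "p dvd (1 + x)^2 * (2 * t - y * (1 + t^2))" using Q E by (simp only: E_def dvd_lin_comb2)
  then show "p dvd 2 * t - y * (1 + t^2)" by (rule dvd_cancel_square[OF x])
qed

lemma circle_slope_mem:
  assumes z: "z \<in> unit_circle_mod p - {(p - 1, 0)}"
  shows "0 \<le> circle_slope z" "circle_slope z < p" "\<not> p dvd (circle_slope z)^2 + 1"
    "circle_param (circle_slope z) = z"
proof -
  obtain x y where xy: "z = (x, y)" by force
  have r: "0 \<le> x" "x < p" "0 \<le> y" "y < p" and Q: "p dvd x^2 + y^2 - 1"
    using z xy by (auto simp: unit_circle_mod_def cong_iff_dvd_diff)
  have nx: "\<not> p dvd 1 + x" using z xy not_dvd_one_plus_fst by simp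
  define w where "w = modular_inverse p (1 + x)"
  define t where "t = (y * w) mod p"
  have slope: "circle_slope z = t" by (simp add: circle_slope_def xy t_def w_def)
  have Dw: "p dvd (1 + x) * w - 1" unfolding w_def using nx by (rule dvd_mult_modular_inverse_minus_one)
  have Dt: "p dvd y * w - t" unfolding t_def by (rule dvd_minus_mod)
  have "(1 + x) * t - y = (- (1 + x)) * (y * w - t) + y * ((1 + x) * w - 1)"
    by (simp add: algebra_simps)
  then have "p dvd (1 + x) * t - y" using Dt Dw by (simp only: dvd_lin_comb2)
  note rel = slope_relations[OF Q nx this]
  show "0 \<le> circle_slope z" "circle_slope z < p" using p_pos by (simp_all add: slope t_def)
  show "\<not> p dvd (circle_slope z)^2 + 1" using rel(1) by (simp add: slope)
  define v where "v = modular_inverse p (1 + t^2)"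
  have Dv: "p dvd (1 + t^2) * v - 1"
    unfolding v_def using rel(1) by (intro dvd_mult_modular_inverse_minus_one) (simp add: add.commute)
  have "(1 - t^2) * v - x = v * ((1 - x) - (1 + x) * t^2) + x * ((1 + t^2) * v - 1)"
    "2 * t * v - y = v * (2 * t - y * (1 + t^2)) + y * ((1 + t^2) * v - 1)"
    by (simp_all add: algebra_simps)
  then have "p dvd (1 - t^2) * v - x" "p dvd 2 * t * v - y"
    using rel(2,3) Dv by (simp_all only: dvd_lin_comb2)
  then have "((1 - t^2) * v) mod p = x" "(2 * t * v) mod p = y"
    using r by (simp_all add: mod_eq_if_dvd_diff)
  then show "circle_param (circle_slope z) = z" unfolding slope by (simp add: circle_param_def v_def xy)
qed

lemma circle_slope_param:
  assumes t: "0 \<le> t" "t < p" "\<not> p dvd t^2 + 1"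
  shows "circle_slope (circle_param t) = t"
proof -
  obtain x y where xy: "circle_param t = (x, y)" by force
  define w where "w = modular_inverse p (1 + x)"
  have Dw: "p dvd (1 + x) * w - 1"
    unfolding w_def using circle_param_mem(2)[OF t(3)] xy by (intro dvd_mult_modular_inverse_minus_one) simp
  have "p dvd y - t * (1 + x)" using circle_param_mem(3)[OF t(3)] xy by simp
  moreover have "y * w - t = w * (y - t * (1 + x)) + t * ((1 + x) * w - 1)" by (simp add: algebra_simps)
  ultimately have "p dvd y * w - t" using Dw by (simp only: dvd_lin_comb2)
  then have "(y * w) mod p = t" using t(1,2) by (rule mod_eq_if_dvd_diff)
  then show ?thesis by (simp add: circle_slope_def xy w_def)
qed

lemma bij_betw_circle_param:
  "bij_betw circle_param {t. 0 \<le> t \<and> t < p \<and> \<not> p dvd t^2 + 1}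
     (unit_circle_mod p - {(p - 1, 0)})"
  by (rule bij_betw_byWitness[where f' = circle_slope])
     (auto simp: circle_slope_param circle_slope_mem dest: circle_param_mem(1))

lemma card_unit_circle_mod_prime: "int (card (unit_circle_mod p)) = p - Legendre (- 1) p"
proof -
  let ?S = "unit_circle_mod p"
  let ?R = "{t. 0 \<le> t \<and> t < p \<and> [t^2 = - 1] (mod p)}"
  let ?T = "{t. 0 \<le> t \<and> t < p \<and> \<not> p dvd t^2 + 1}"
  have "?T = {0..<p} - ?R" by (auto simp: cong_iff_dvd_diff)
  then have "card ?T = card {0..<p} - card ?R"
    by (simp add: card_Diff_subset finite_subset[of ?R "{0..<p}"] subset_eq)
  moreover have "card ?R \<le> card {0..<p}" by (intro card_mono) auto
  moreover have "\<not> p dvd - 1" using pr by (metis dvd_minus_iff not_prime_unit)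
  then have "int (card ?R) = 1 + Legendre (- 1) p" by (rule card_square_roots_mod_prime[OF pr p2])
  ultimately have card_T: "int (card ?T) = p - 1 - Legendre (- 1) p" using p_pos by simp
  have "(p - 1)^2 + 0^2 - 1 = p * (p - 2)" by (simp add: algebra_simps power2_eq_square)
  then have "(p - 1, 0) \<in> ?S" using p_pos by (simp add: unit_circle_mod_def cong_iff_dvd_diff)
  then have "card ?S = card (?S - {(p - 1, 0)}) + 1"
    using finite_unit_circle_mod card_Suc_Diff1 by fastforce
  also have "card (?S - {(p - 1, 0)}) = card ?T"
    using bij_betw_same_card[OF bij_betw_circle_param] by simp
  finally show ?thesis using card_T by simp
qed

end

lemma Phi_odd_prime_power:
  fixes p e :: nat
  assumes pr: "prime p" and p2: "p \<noteq> 2" and e: "e \<ge> 1"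
  shows "real (Phi (p ^ e)) = real p ^ e * (1 - real_of_int (beta p) / real p)"
proof -
  have "Phi (p ^ e) = card (unit_circle_mod (int p ^ e))"
    using Phi_eq_card_unit_circle_mod[of "p ^ e"] by simp
  also have "\<dots> = p ^ (e - 1) * card (unit_circle_mod (int p))"
    using card_unit_circle_mod_odd_prime_power[of "int p" e] pr p2 e by simp
  finally have "int (Phi (p ^ e)) = int p ^ (e - 1) * (int p - beta p)"
    using card_unit_circle_mod_prime[of "int p"] pr p2 by (simp add: beta_def)
  from arg_cong[OF this, of real_of_int]
  have "real (Phi (p ^ e)) = real p ^ (e - 1) * (real p - real_of_int (beta p))" by simp
  moreover have "real p ^ e * (1 - real_of_int (beta p) / real p) =
      real p ^ (e - 1) * (real p - real_of_int (beta p))"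
    using e prime_gt_0_nat[OF pr] by (cases e) (simp_all add: field_simps)
  ultimately show ?thesis by simp
qed

lemma Phi_prime_power:
  fixes p e :: nat
  assumes "prime p" "e \<ge> 1"
  shows "real (Phi (p ^ e)) =
    (if p = 2 \<and> e \<ge> 2 then 2 else 1) * real p ^ e * (1 - real_of_int (beta p) / real p)"
proof (cases "p = 2")
  case True
  then have "beta p = 0" by (simp add: beta_def)
  moreover have "e = 1" if "\<not> e \<ge> 2" using that assms(2) by simp
  ultimately show ?thesis using Phi_two_power[of e] Phi_2 True by auto
next
  case False
  then show ?thesis using Phi_odd_prime_power assms by simp
qed

lemma prod_prime_factors_four_dvd:
  fixes n :: nat
  assumes "n > 0"
  shows "(\<Prod>p\<in>prime_factors n. if p = 2 \<and> multiplicity p n \<ge> 2 then 2 else 1 :: real) =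
         (if 4 dvd n then 2 else 1)"
proof -
  have "4 dvd n \<longleftrightarrow> 2 ^ 2 dvd n" by simp
  also have "\<dots> \<longleftrightarrow> 2 \<le> multiplicity 2 n"
    using assms by (intro power_dvd_iff_le_multiplicity) auto
  finally have "4 dvd n \<longleftrightarrow> 2 \<in> prime_factors n \<and> 2 \<le> multiplicity 2 n"
    using prime_factors_multiplicity[of n] by auto
  moreover have "(\<Prod>p\<in>prime_factors n. if p = 2 \<and> multiplicity p n \<ge> 2 then 2 else 1 :: real) =
      (\<Prod>p\<in>prime_factors n. if p = 2 then (if multiplicity 2 n \<ge> 2 then 2 else 1) else 1)"
    by (rule prod.cong) auto
  ultimately show ?thesis by (simp add: prod.delta)
qed

theorem mainTheorem3:
  fixes n :: nat
  assumes "n > 0"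
  shows "real (Phi n) =
    (if 4 dvd n
     then 2 * real n * (\<Prod>p\<in>prime_factors n. (1 - real_of_int (beta p) / real p))
     else real n * (\<Prod>p\<in>prime_factors n. (1 - real_of_int (beta p) / real p)))"
proof -
  let ?P = "prime_factors n"
  let ?e = "\<lambda>p. multiplicity p n"
  let ?c = "\<lambda>p::nat. if p = 2 \<and> ?e p \<ge> 2 then 2 else 1 :: real"
  let ?f = "\<lambda>p. 1 - real_of_int (beta p) / real p"
  have n: "(\<Prod>p\<in>?P. p ^ ?e p) = n" using prime_factorization_nat[OF assms] by simp
  have "Phi n = (\<Prod>p\<in>?P. Phi (p ^ ?e p))"
    using Phi_prod_prime_powers[of ?P ?e, unfolded n] by auto
  then have "real (Phi n) = (\<Prod>p\<in>?P. real (Phi (p ^ ?e p)))" by simp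
  also have "\<dots> = (\<Prod>p\<in>?P. ?c p * real p ^ ?e p * ?f p)"
    by (intro prod.cong refl Phi_prime_power) (auto simp: prime_factors_multiplicity)
  also have "\<dots> = (\<Prod>p\<in>?P. ?c p) * real (\<Prod>p\<in>?P. p ^ ?e p) * (\<Prod>p\<in>?P. ?f p)"
    by (simp add: prod.distrib)
  finally show ?thesis
    using prod_prime_factors_four_dvd[OF assms] n by simp
qed

end
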